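(* Let $k$ be a field, $A$ a $k$-algebra and $a_1,\ldots,a_m\in A$. If $\dim_kP_{\ge0}(a_1,\ldots,a_m)<\infty$, then the subspace $ka_1+\cdots+ka_m$ is algebraic of bounded degree, i.e. there is $D$ such that every element of $ka_1+\cdots+ka_m$ is a root of a nonzero polynomial in $k[t]$ of degree at most $D$.
   Context: Algebras are associative with unit. For nonnegative integers $i_1,\ldots,i_m$, $p_{i_1,\ldots,i_m}(x_1,\ldots,x_m)$ is the sum of all distinct noncommutative monomials with exactly $i_j$ occurrences of $x_j$ for each $j$ ($p_{0,\ldots,0}=1$); $p_{i_1,\ldots,i_m}(a_1,\ldots,a_m)$ is its evaluation at $x_j=a_j$. $P_n(a_1,\ldots,a_m)=\operatorname{span}_k\{p_{i_1,\ldots,i_m}(a_1,\ldots,a_m)\mid i_1+\cdots+i_m=n\}$ and $P_{\ge 0}(a_1,\ldots,a_m)=\sum_{n=0}^\infty P_n(a_1,\ldots,a_m)$. *)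

theory Defs
  imports "HOL-Computational_Algebra.Polynomial"
begin

text \<open>A k-algebra (associative, unital) over a field k is modelled as a ring type 'a
  together with a unital ring homomorphism phi from k into the centre of 'a;
  scalar multiplication is c . x = phi c * x.\<close>

definition is_k_algebra :: "('k::field \<Rightarrow> 'a::ring_1) \<Rightarrow> bool" where
  "is_k_algebra \<phi> \<longleftrightarrow>
     \<phi> 1 = 1 \<and> (\<forall>a b. \<phi> (a + b) = \<phi> a + \<phi> b) \<and> (\<forall>a b. \<phi> (a * b) = \<phi> a * \<phi> b)
     \<and> (\<forall>c x. \<phi> c * x = x * \<phi> c)"

definition kspan :: "('k::field \<Rightarrow> 'a::ring_1) \<Rightarrow> 'a set \<Rightarrow> 'a set" where
  "kspan \<phi> S = {x. \<exists>F c. finite F \<and> F \<subseteq> S \<and> x = (\<Sum>s\<in>F. \<phi> (c s) * s)}"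

definition fin_dim :: "('k::field \<Rightarrow> 'a::ring_1) \<Rightarrow> 'a set \<Rightarrow> bool" where
  "fin_dim \<phi> V \<longleftrightarrow> (\<exists>B. finite B \<and> B \<subseteq> V \<and> V \<subseteq> kspan \<phi> B)"

text \<open>Evaluation of a noncommutative monomial (word over {0..<m}) at as.\<close>
definition eval_word :: "'a::ring_1 list \<Rightarrow> nat list \<Rightarrow> 'a" where
  "eval_word as w = prod_list (map (\<lambda>j. as ! j) w)"

text \<open>p_{i_1,...,i_m}(a_1,...,a_m): sum of all distinct words with exactly i_j occurrences
  of x_j, evaluated at as (m = length as = length is).\<close>
definition p_eval :: "'a::ring_1 list \<Rightarrow> nat list \<Rightarrow> 'a" where
  "p_eval as is = (\<Sum>w\<in>{w. set w \<subseteq> {..<length as} \<and> (\<forall>j<length as. count_list w j = is ! j)}.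
                     eval_word as w)"

definition P_n :: "('k::field \<Rightarrow> 'a::ring_1) \<Rightarrow> 'a list \<Rightarrow> nat \<Rightarrow> 'a set" where
  "P_n \<phi> as n = kspan \<phi> {p_eval as is | is. length is = length as \<and> sum_list is = n}"

text \<open>P_{>=0} = sum over n of the subspaces P_n = span of their union.\<close>
definition P_ge0 :: "('k::field \<Rightarrow> 'a::ring_1) \<Rightarrow> 'a list \<Rightarrow> 'a set" where
  "P_ge0 \<phi> as = kspan \<phi> (\<Union>n. P_n \<phi> as n)"

definition poly_eval_alg :: "('k::field \<Rightarrow> 'a::ring_1) \<Rightarrow> 'k poly \<Rightarrow> 'a \<Rightarrow> 'a" where
  "poly_eval_alg \<phi> q x = (\<Sum>i\<le>degree q. \<phi> (coeff q i) * x ^ i)"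

end

theory Submission
  imports Defs
begin

text \<open>If \<open>x = \<Sum>\<^sub>j c\<^sub>j a\<^sub>j\<close>, expanding \<open>x\<^sup>n\<close> into words and collecting the words with the same
  letter content gives \<open>x\<^sup>n = \<Sum> c\<^sup>i p\<^sub>i(a\<^sub>1,\<dots>,a\<^sub>m)\<close> with \<open>|i| = n\<close>, so every power of \<open>x\<close> lies in
  \<open>P\<^sub>n \<subseteq> P\<^sub>\<ge>\<^sub>0\<close>. If \<open>P\<^sub>\<ge>\<^sub>0\<close> is spanned by \<open>N\<close> vectors, then \<open>1, x, \<dots>, x\<^sup>N\<close> are linearly
  dependent, which is a nonzero polynomial of degree at most \<open>N\<close> annihilating \<open>x\<close>.\<close>

definition words :: "nat \<Rightarrow> nat \<Rightarrow> nat list set" where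
  "words m n = {w. set w \<subseteq> {..<m} \<and> length w = n}"

definition letter_counts :: "nat \<Rightarrow> nat list \<Rightarrow> nat list" where
  "letter_counts m w = map (count_list w) [0..<m]"

lemma finite_words: "finite (words m n)"
  unfolding words_def by (rule finite_lists_length_eq) simp

lemma words_Suc: "words m (Suc n) = (\<lambda>(j, w). j # w) ` ({..<m} \<times> words m n)"
  unfolding words_def by (auto simp: length_Suc_conv image_iff)

lemma sum_count_list_lessThan:
  "set w \<subseteq> {..<m::nat} \<Longrightarrow> (\<Sum>j<m. count_list w j) = length w"
  using sum_count_set[of w "{..<m}"] by auto

lemma prod_list_map_eq_prod_power_count_list:
  fixes d :: "nat \<Rightarrow> 'k::comm_monoid_mult"
  shows "set w \<subseteq> {..<m::nat} \<Longrightarrow> prod_list (map d w) = (\<Prod>j<m. d j ^ count_list w j)"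
proof (induction w)
  case Nil
  then show ?case by simp
next
  case (Cons a w)
  have "(\<Prod>j<m. d j ^ count_list (a # w) j) = (\<Prod>j<m. d j ^ count_list w j * (if a = j then d j else 1))"
    by (rule prod.cong) (auto simp: mult.commute)
  also have "\<dots> = (\<Prod>j<m. d j ^ count_list w j) * d a"
    using Cons.prems by (simp add: prod.distrib)
  finally show ?case using Cons by (simp add: ac_simps)
qed

lemma length_letter_counts [simp]: "length (letter_counts m w) = m"
  by (simp add: letter_counts_def)

lemma sum_list_letter_counts: "w \<in> words m n \<Longrightarrow> sum_list (letter_counts m w) = n"
  by (simp add: letter_counts_def words_def sum_list_distinct_conv_sum_set atLeast0LessThan
      sum_count_list_lessThan)

lemma words_with_letter_counts:
  assumes "w0 \<in> words m n"
  shows "{w \<in> words m n. letter_counts m w = letter_counts m w0} =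
         {w. set w \<subseteq> {..<m} \<and> (\<forall>j<m. count_list w j = letter_counts m w0 ! j)}"
proof -
  have "length w = n" if "set w \<subseteq> {..<m}" "\<forall>j<m. count_list w j = count_list w0 j" for w
  proof -
    have "length w = (\<Sum>j<m. count_list w0 j)"
      using that by (simp add: sum_count_list_lessThan[symmetric])
    then show ?thesis using assms by (simp add: words_def sum_count_list_lessThan)
  qed
  then show ?thesis
    using assms by (auto simp: words_def letter_counts_def list_eq_iff_nth_eq)
qed

lemma (in vector_space) linear_relation_of_family_in_span:
  assumes "finite B" "\<And>i. i \<le> card B \<Longrightarrow> f i \<in> span B"
  shows "\<exists>c i. i \<le> card B \<and> c i \<noteq> 0 \<and> (\<Sum>i\<le>card B. c i *s f i) = 0"
proof (cases "inj_on f {..card B}")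
  case True
  have "dependent (f ` {..card B})"
  proof (rule ccontr)
    assume "independent (f ` {..card B})"
    then have "card (f ` {..card B}) \<le> card B"
      using independent_span_bound[OF assms(1)] assms(2) by blast
    then show False by (simp add: card_image[OF True])
  qed
  then obtain u v where "v \<in> f ` {..card B}" "u v \<noteq> 0" "(\<Sum>v\<in>f ` {..card B}. u v *s v) = 0"
    using dependent_finite by blast
  then show ?thesis
    by (intro exI[of _ "u \<circ> f"]) (auto simp: sum.reindex[OF True])
next
  case False
  then obtain i j where ij: "i \<le> card B" "j \<le> card B" "i \<noteq> j" "f i = f j"
    unfolding inj_on_def by auto
  let ?c = "\<lambda>k. if k = i then 1 else if k = j then -1 else 0"
  have "(\<Sum>k\<le>card B. ?c k *s f k) = (\<Sum>k\<le>card B. (if k = i then f i else 0) - (if k = j then f j else 0))"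
    using ij(3) by (intro sum.cong) auto
  also have "\<dots> = 0" using ij by (simp add: sum_subtractf)
  finally show ?thesis using ij by (intro exI[of _ ?c]) auto
qed

lemma coeff_sum_monom_atMost:
  "coeff (\<Sum>i\<le>N. monom (c i) i) k = (if k \<le> N then c k else 0)"
  by (simp add: coeff_sum coeff_monom)

locale k_algebra =
  fixes \<phi> :: "'k::field \<Rightarrow> 'a::ring_1"
  assumes is_k_algebra: "is_k_algebra \<phi>"
begin

lemma phi_1: "\<phi> 1 = 1" and phi_add: "\<phi> (a + b) = \<phi> a + \<phi> b"
  and phi_mult: "\<phi> (a * b) = \<phi> a * \<phi> b" and phi_central: "\<phi> c * x = x * \<phi> c"
  using is_k_algebra unfolding is_k_algebra_def by blast+

lemma phi_0: "\<phi> 0 = 0"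
  using phi_add[of 0 0] by simp

sublocale V: vector_space "\<lambda>c x. \<phi> c * x"
  by unfold_locales (simp_all add: phi_add phi_mult distrib_left distrib_right mult.assoc phi_1)

lemma kspan_eq_span: "kspan \<phi> S = V.span S"
  unfolding kspan_def V.span_explicit by auto

lemma span_set_eq_sum_nth:
  "x \<in> V.span (set as) \<Longrightarrow> \<exists>d. x = (\<Sum>j<length as. \<phi> (d j) * as ! j)"
proof (induction as arbitrary: x)
  case Nil
  then show ?case by simp
next
  case (Cons a as)
  then obtain c where "x - \<phi> c * a \<in> V.span (set as)"
    using V.span_breakdown_eq[of x a "set as"] by auto
  then obtain d where d: "x - \<phi> c * a = (\<Sum>j<length as. \<phi> (d j) * as ! j)"
    using Cons.IH by blast
  have "x = (\<Sum>j<length (a # as). \<phi> (case_nat c d j) * (a # as) ! j)"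
    using d by (simp only: length_Cons sum.lessThan_Suc_shift) (simp add: algebra_simps)
  then show ?case by blast
qed

lemma power_sum_eq_sum_words:
  "(\<Sum>j<length as. \<phi> (d j) * as ! j) ^ n =
     (\<Sum>w\<in>words (length as) n. \<phi> (prod_list (map d w)) * eval_word as w)"
proof (induction n)
  case 0
  have "words (length as) 0 = {[]}" by (auto simp: words_def)
  then show ?case by (simp add: eval_word_def phi_1)
next
  case (Suc n)
  define m where "m = length as"
  define g where "g w = \<phi> (prod_list (map d w)) * eval_word as w" for w
  have scalar_past_letter: "\<phi> (d j) * as ! j * g w = g (j # w)" for j w
  proof -
    have "\<phi> (d j) * as ! j * g w = \<phi> (d j) * (as ! j * \<phi> (prod_list (map d w))) * eval_word as w"
      by (simp add: g_def mult.assoc)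
    also have "\<dots> = \<phi> (d j * prod_list (map d w)) * (as ! j * eval_word as w)"
      unfolding phi_central[of "prod_list (map d w)" "as ! j", symmetric]
      by (simp add: mult.assoc)
    finally show ?thesis by (simp add: g_def eval_word_def)
  qed
  have inj: "inj_on (\<lambda>(j, w). j # w) ({..<m} \<times> words m n)"
    by (auto simp: inj_on_def)
  have "(\<Sum>j<m. \<phi> (d j) * as ! j) ^ Suc n = (\<Sum>j<m. \<phi> (d j) * as ! j) * (\<Sum>w\<in>words m n. g w)"
    using Suc unfolding m_def g_def by simp
  also have "\<dots> = (\<Sum>j<m. \<Sum>w\<in>words m n. \<phi> (d j) * as ! j * g w)"
    by (simp add: sum_distrib_left sum_distrib_right sum.swap[of _ "words m n"])
  also have "\<dots> = (\<Sum>j<m. \<Sum>w\<in>words m n. g (j # w))"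
    by (simp only: scalar_past_letter)
  also have "\<dots> = (\<Sum>(j, w)\<in>{..<m} \<times> words m n. g (j # w))"
    by (simp add: sum.cartesian_product)
  also have "\<dots> = (\<Sum>w\<in>words m (Suc n). g w)"
    unfolding words_Suc by (subst sum.reindex[OF inj]) (simp add: case_prod_unfold)
  finally show ?case unfolding m_def g_def .
qed

lemma power_in_P_n:
  assumes "x \<in> V.span (set as)"
  shows "x ^ n \<in> P_n \<phi> as n"
proof -
  obtain d where x: "x = (\<Sum>j<length as. \<phi> (d j) * as ! j)"
    using span_set_eq_sum_nth[OF assms] by blast
  define m where "m = length as"
  define W where "W = words m n"
  define c where "c is = (\<Prod>j<m. d j ^ (is ! j))" for "is"
  define G where "G = {p_eval as is | is. length is = length as \<and> sum_list is = n}"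
  have "x ^ n = (\<Sum>w\<in>W. \<phi> (prod_list (map d w)) * eval_word as w)"
    unfolding x W_def m_def by (rule power_sum_eq_sum_words)
  also have "\<dots> = (\<Sum>w\<in>W. \<phi> (c (letter_counts m w)) * eval_word as w)"
    using prod_list_map_eq_prod_power_count_list[of _ m d]
    by (intro sum.cong) (simp_all add: W_def words_def c_def letter_counts_def)
  also have "\<dots> = (\<Sum>is\<in>letter_counts m ` W.
      \<Sum>w\<in>{w \<in> W. letter_counts m w = is}. \<phi> (c (letter_counts m w)) * eval_word as w)"
    by (rule sum.group[symmetric]) (auto simp: W_def finite_words)
  also have "\<dots> = (\<Sum>is\<in>letter_counts m ` W. \<phi> (c is) * p_eval as is)"
    by (rule sum.cong) (auto simp: p_eval_def W_def words_with_letter_counts m_def sum_distrib_left)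
  also have "\<dots> \<in> V.span G"
    by (intro V.span_sum V.span_scale V.span_base)
      (auto simp: G_def W_def m_def sum_list_letter_counts)
  finally show ?thesis unfolding P_n_def kspan_eq_span G_def .
qed

lemma power_in_P_ge0: "x \<in> kspan \<phi> (set as) \<Longrightarrow> x ^ n \<in> P_ge0 \<phi> as"
  using power_in_P_n V.span_superset unfolding P_ge0_def kspan_eq_span by blast

lemma poly_eval_alg_sum_monom:
  "poly_eval_alg \<phi> (\<Sum>i\<le>N. monom (c i) i) x = (\<Sum>i\<le>N. \<phi> (c i) * x ^ i)"
proof -
  define q where "q = (\<Sum>i\<le>N. monom (c i) i)"
  have "degree q \<le> N"
    by (rule degree_le) (simp add: q_def coeff_sum_monom_atMost)
  then have "poly_eval_alg \<phi> q x = (\<Sum>i\<le>N. \<phi> (coeff q i) * x ^ i)"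
    unfolding poly_eval_alg_def
    by (intro sum.mono_neutral_left) (auto simp: coeff_eq_0 phi_0)
  also have "\<dots> = (\<Sum>i\<le>N. \<phi> (c i) * x ^ i)"
    by (rule sum.cong) (simp_all add: q_def coeff_sum_monom_atMost)
  finally show ?thesis unfolding q_def .
qed

lemma algebraic_if_linear_relation:
  assumes "i \<le> N" "c i \<noteq> 0" "(\<Sum>i\<le>N. \<phi> (c i) * x ^ i) = 0"
  shows "\<exists>q::'k poly. q \<noteq> 0 \<and> degree q \<le> N \<and> poly_eval_alg \<phi> q x = 0"
proof (intro exI conjI)
  let ?q = "\<Sum>i\<le>N. monom (c i) i"
  show "?q \<noteq> 0"
  proof
    assume "?q = 0"
    then have "coeff ?q i = 0" by simp
    then show False using assms(1,2) by (simp add: coeff_sum_monom_atMost)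
  qed
  show "degree ?q \<le> N"
    by (rule degree_le) (simp add: coeff_sum_monom_atMost)
  show "poly_eval_alg \<phi> ?q x = 0"
    using assms(3) by (simp add: poly_eval_alg_sum_monom)
qed

lemma algebraic_bounded_degree_if_fin_dim_P_ge0:
  assumes "fin_dim \<phi> (P_ge0 \<phi> as)"
  shows "\<exists>D::nat. \<forall>x\<in>kspan \<phi> (set as).
           \<exists>q::'k poly. q \<noteq> 0 \<and> degree q \<le> D \<and> poly_eval_alg \<phi> q x = 0"
proof -
  obtain B where "finite B" and spans: "P_ge0 \<phi> as \<subseteq> V.span B"
    using assms unfolding fin_dim_def kspan_eq_span by blast
  have "\<exists>q::'k poly. q \<noteq> 0 \<and> degree q \<le> card B \<and> poly_eval_alg \<phi> q x = 0"
    if "x \<in> kspan \<phi> (set as)" for x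
  proof -
    have "x ^ i \<in> V.span B" for i
      using power_in_P_ge0[OF that] spans by blast
    then obtain c i where "i \<le> card B" "c i \<noteq> 0" "(\<Sum>i\<le>card B. \<phi> (c i) * x ^ i) = 0"
      using V.linear_relation_of_family_in_span[OF \<open>finite B\<close>] by blast
    then show ?thesis by (rule algebraic_if_linear_relation)
  qed
  then show ?thesis by blast
qed

end

theorem corollary3p7:
  fixes \<phi> :: "'k::field \<Rightarrow> 'a::ring_1" and as :: "'a list"
  assumes "is_k_algebra \<phi>"
    and "fin_dim \<phi> (P_ge0 \<phi> as)"
  shows "\<exists>D::nat. \<forall>x\<in>kspan \<phi> (set as).
           \<exists>q::'k poly. q \<noteq> 0 \<and> degree q \<le> D \<and> poly_eval_alg \<phi> q x = 0"
  using k_algebra.algebraic_bounded_degree_if_fin_dim_P_ge0[OF k_algebra.intro[OF assms(1)] assms(2)] .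

end
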